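(* Under TLMP and stochastic rolling-window dispatch as described in the context, for all realizations of stochastic demands and probabilistic load forecasts, it is optimal for a price-taking ESR $i$ to bid with its true benefit/cost curves and true operational parameters; that is, the truthful bidding parameter $\boldsymbol\theta_i^*$ maximizes $\Pi_i^{TLMP}(\boldsymbol\theta_i)$ over bidding parameters $\boldsymbol\theta_i$.
   Context: Single-bus market with $N$ ESRs over horizon $\mathscr H=\{1,\dots,T\}$. In each interval $t$ the operator solves a scenario-based stochastic dispatch problem over window $\{t,\dots,t+W-1\}$ (minimizing interval-$t$ bid cost plus probability-weighted bid cost over $K$ forecast demand scenarios, subject to power balance with realized demand $d_t$ and forecast scenario demands, SOC transitions $E_{it}-E_{i(t-1)}=\xi^C_ig^C_{it}-g^D_{it}/\xi^D_i$, SOC, power and ramping limits, with initial conditions given by the previously realized dispatch), using the bids submitted by the ESRs; the interval-$t$ solution is the realized dispatch. The TLMP of ESR $i$ in interval $t$ is $\pi_{it}^{TLMP\text{-}C}=\lambda^*_t-\xi_i^{C}\phi^*_{it}-\Delta_{it}^{C*}$ (charging) and $\pi_{it}^{TLMP\text{-}D}=\lambda^*_t-\phi^*_{it}/\xi_i^{D}+\Delta_{it}^{D*}$ (discharging), where $\lambda_t^*$ is the optimal multiplier of the interval-$t$ power balance, $\phi^*_{it}$ that of ESR $i$'s interval-$t$ SOC transition equation, and $\Delta_{it}^{C*}=-(\bar{\mu}_{it}^{C*}-\underline{\mu}_{it}^{C*})+\sum_{k=1}^K(\bar{\mu}_{i(t+1)k}^{C*}-\underline{\mu}_{i(t+1)k}^{C*})$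 with $\bar\mu_{it},\underline\mu_{it}$ the multipliers of the ramp constraints between $t-1$ and $t$ and $\bar\mu_{i(t+1)k},\underline\mu_{i(t+1)k}$ those between $t$ and $t+1$ in scenario $k$ ($\Delta^{D*}_{it}$ analogous). ESR $i$ submits bids parameterized by $\boldsymbol\theta_i=(c_i^{D},c_i^{C},\bar{r}_i^{D},\bar{r}_i^{C},\underline{r}_i^{D},\underline{r}_i^{C},\bar{E}_i,\underline{E}_i,\bar{g}_i^{D},\bar{g}_i^{C},\underline{g}_i^{D},\underline{g}_i^{C})$ (bid-in marginal costs, ramp limits, SOC limits, power limits), giving bid curves $f^C_{it}(\cdot|\boldsymbol\theta_i),f^D_{it}(\cdot|\boldsymbol\theta_i)$; $\boldsymbol\theta_i^*$ denotes the true parameters, and the true benefit/cost curves are $q^C_{it}=f^C_{it}(\cdot|\boldsymbol\theta_i^* )$, $q^D_{it}=f^D_{it}(\cdot|\boldsymbol\theta_i^* )$. Let $g^{C*}_{it}(\boldsymbol\theta_i),g^{D*}_{it}(\boldsymbol\theta_i)$ be the resulting dispatch. Price-taking: the ESR treats the TLMP sequence as fixed (independent of $\boldsymbol\theta_i$) and evaluates the profit $\Pi_i^{TLMP}(\boldsymbol\theta_i)=\sum_{t=1}^T\big(\pi_{it}^{TLMP\text{-}D}g_{it}^{D*}(\boldsymbol\theta_i)-\pi_{it}^{TLMP\text{-}C}g_{it}^{C*}(\boldsymbol\theta_i)-q_{it}^{D}(g^{D*}_{it}(\boldsymbol\theta_i))+q_{it}^{C}(g^{C*}_{it}(\boldsymbol\theta_i))\big)$;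 the ESR requires its dispatch to lie in its true feasible operating region (true ramp, SOC and power limits), since otherwise it cannot follow the dispatch. *)

theory Defs
  imports Complex_Main
begin

record bid =
  cD    :: real   (* bid-in marginal cost of discharging *)
  cC    :: real   (* bid-in marginal benefit of charging *)
  rDup  :: real   (* ramp-up limit, discharging *)
  rCup  :: real   (* ramp-up limit, charging *)
  rDdn  :: real   (* ramp-down limit, discharging *)
  rCdn  :: real   (* ramp-down limit, charging *)
  Emax  :: real
  Emin  :: real
  gDmax :: real
  gCmax :: real
  gDmin :: real
  gCmin :: real

definition bidD :: "bid \<Rightarrow> real \<Rightarrow> real" where "bidD th g = cD th * g"
definition bidC :: "bid \<Rightarrow> real \<Rightarrow> real" where "bidC th g = cC th * g"

section \<open>Market data (one realization of demands and forecasts)\<close>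

record market =
  nN    :: nat                               (* number of ESRs, indexed 0..<N *)
  nK    :: nat                               (* number of scenarios, 0..<K *)
  nW    :: nat
  nT    :: nat                               (* horizon T, intervals 1..T *)
  xiC   :: "nat \<Rightarrow> real"                   (* charging efficiency of ESR i *)
  xiD   :: "nat \<Rightarrow> real"                   (* discharging efficiency of ESR i *)
  prob  :: "nat \<Rightarrow> nat \<Rightarrow> real"           (* prob t k: probability of scenario k in window at t *)
  dem   :: "nat \<Rightarrow> real"                   (* realized demand d_t *)
  fdem  :: "nat \<Rightarrow> nat \<Rightarrow> nat \<Rightarrow> real"   (* fdem t tau k: forecast demand at tau, scenario k, issued at t *)
  Einit :: "nat \<Rightarrow> real"                   (* initial SOC E_{i0} *)
  gCinit :: "nat \<Rightarrow> real"
  gDinit :: "nat \<Rightarrow> real"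

definition win :: "market \<Rightarrow> nat \<Rightarrow> nat set" where
  "win M t = {Suc t..<t + nW M}"

record wdec =
  wgC  :: "nat \<Rightarrow> real"
  wgD  :: "nat \<Rightarrow> real"
  wE   :: "nat \<Rightarrow> real"
  wgCs :: "nat \<Rightarrow> nat \<Rightarrow> nat \<Rightarrow> real"     (* g^C_{i tau k} *)
  wgDs :: "nat \<Rightarrow> nat \<Rightarrow> nat \<Rightarrow> real"
  wEs  :: "nat \<Rightarrow> nat \<Rightarrow> nat \<Rightarrow> real"

definition prevS :: "nat \<Rightarrow> (nat \<Rightarrow> real) \<Rightarrow> (nat \<Rightarrow> nat \<Rightarrow> nat \<Rightarrow> real) \<Rightarrow> nat \<Rightarrow> nat \<Rightarrow> nat \<Rightarrow> real" where
  "prevS t v vs i tau k = (if tau = Suc t then v i else vs i (tau - 1) k)"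

text \<open>Constraints of the interval-t problem, given the bid profile b and the initial
  conditions pE, pC, pD (previously realized SOC and dispatch).\<close>
definition wfeas :: "market \<Rightarrow> (nat \<Rightarrow> bid) \<Rightarrow> nat \<Rightarrow> (nat \<Rightarrow> real) \<Rightarrow> (nat \<Rightarrow> real) \<Rightarrow> (nat \<Rightarrow> real) \<Rightarrow> wdec \<Rightarrow> bool" where
  "wfeas M b t pE pC pD x \<longleftrightarrow>
     (\<Sum>i<nN M. wgD x i - wgC x i) = dem M t \<and>
     (\<forall>i<nN M.
        wE x i - pE i = xiC M i * wgC x i - wgD x i / xiD M i \<and>
        Emin (b i) \<le> wE x i \<and> wE x i \<le> Emax (b i) \<and>
        gCmin (b i) \<le> wgC x i \<and> wgC x i \<le> gCmax (b i) \<and>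
        gDmin (b i) \<le> wgD x i \<and> wgD x i \<le> gDmax (b i) \<and>
        wgC x i - pC i \<le> rCup (b i) \<and> pC i - wgC x i \<le> rCdn (b i) \<and>
        wgD x i - pD i \<le> rDup (b i) \<and> pD i - wgD x i \<le> rDdn (b i)) \<and>
     (\<forall>tau\<in>win M t. \<forall>k<nK M.
        (\<Sum>i<nN M. wgDs x i tau k - wgCs x i tau k) = fdem M t tau k \<and>
        (\<forall>i<nN M.
          wEs x i tau k - prevS t (wE x) (wEs x) i tau k
            = xiC M i * wgCs x i tau k - wgDs x i tau k / xiD M i \<and>
          Emin (b i) \<le> wEs x i tau k \<and> wEs x i tau k \<le> Emax (b i) \<and>
          gCmin (b i) \<le> wgCs x i tau k \<and> wgCs x i tau k \<le> gCmax (b i) \<and>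
          gDmin (b i) \<le> wgDs x i tau k \<and> wgDs x i tau k \<le> gDmax (b i) \<and>
          wgCs x i tau k - prevS t (wgC x) (wgCs x) i tau k \<le> rCup (b i) \<and>
          prevS t (wgC x) (wgCs x) i tau k - wgCs x i tau k \<le> rCdn (b i) \<and>
          wgDs x i tau k - prevS t (wgD x) (wgDs x) i tau k \<le> rDup (b i) \<and>
          prevS t (wgD x) (wgDs x) i tau k - wgDs x i tau k \<le> rDdn (b i)))"

definition wcost :: "market \<Rightarrow> (nat \<Rightarrow> bid) \<Rightarrow> nat \<Rightarrow> wdec \<Rightarrow> real" where
  "wcost M b t x =
     (\<Sum>i<nN M. bidD (b i) (wgD x i) - bidC (b i) (wgC x i)) +
     (\<Sum>k<nK M. prob M t k *
        (\<Sum>tau\<in>win M t. \<Sum>i<nN M. bidD (b i) (wgDs x i tau k) - bidC (b i) (wgCs x i tau k)))"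

definition wopt :: "market \<Rightarrow> (nat \<Rightarrow> bid) \<Rightarrow> nat \<Rightarrow> (nat \<Rightarrow> real) \<Rightarrow> (nat \<Rightarrow> real) \<Rightarrow> (nat \<Rightarrow> real) \<Rightarrow> wdec \<Rightarrow> bool" where
  "wopt M b t pE pC pD x \<longleftrightarrow> wfeas M b t pE pC pD x \<and>
     (\<forall>y. wfeas M b t pE pC pD y \<longrightarrow> wcost M b t x \<le> wcost M b t y)"

record wmult =
  lam   :: real                          (* interval-t power balance *)
  lams  :: "nat \<Rightarrow> nat \<Rightarrow> real"          (* scenario power balance, tau k *)
  phi   :: "nat \<Rightarrow> real"                 (* interval-t SOC transition, by i *)
  phis  :: "nat \<Rightarrow> nat \<Rightarrow> nat \<Rightarrow> real"
  eUp   :: "nat \<Rightarrow> real"                 (* SOC limits *)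
  eDn   :: "nat \<Rightarrow> real"
  eUps  :: "nat \<Rightarrow> nat \<Rightarrow> nat \<Rightarrow> real"
  eDns  :: "nat \<Rightarrow> nat \<Rightarrow> nat \<Rightarrow> real"
  pCup  :: "nat \<Rightarrow> real"                 (* power limits *)
  pCdn  :: "nat \<Rightarrow> real"
  pDup  :: "nat \<Rightarrow> real"
  pDdn  :: "nat \<Rightarrow> real"
  pCups :: "nat \<Rightarrow> nat \<Rightarrow> nat \<Rightarrow> real"
  pCdns :: "nat \<Rightarrow> nat \<Rightarrow> nat \<Rightarrow> real"
  pDups :: "nat \<Rightarrow> nat \<Rightarrow> nat \<Rightarrow> real"
  pDdns :: "nat \<Rightarrow> nat \<Rightarrow> nat \<Rightarrow> real"
  mCup  :: "nat \<Rightarrow> real"                 (* ramp constraints between t-1 and t: mubar, mulow *)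
  mCdn  :: "nat \<Rightarrow> real"
  mDup  :: "nat \<Rightarrow> real"
  mDdn  :: "nat \<Rightarrow> real"
  mCups :: "nat \<Rightarrow> nat \<Rightarrow> nat \<Rightarrow> real"  (* ramp between tau-1 and tau in scenario k *)
  mCdns :: "nat \<Rightarrow> nat \<Rightarrow> nat \<Rightarrow> real"
  mDups :: "nat \<Rightarrow> nat \<Rightarrow> nat \<Rightarrow> real"
  mDdns :: "nat \<Rightarrow> nat \<Rightarrow> nat \<Rightarrow> real"

text \<open>Equalities: power balance written as (supply - demand) = 0 with term
  -lambda*(...); SOC transition written as E_t - E_{t-1} - xi^C g^C + g^D/xi^D = 0 with term
  +phi*(...). Inequalities written as h(x) <= 0 with term +mu*h(x).\<close>
definition wlag :: "market \<Rightarrow> (nat \<Rightarrow> bid) \<Rightarrow> nat \<Rightarrow> (nat \<Rightarrow> real) \<Rightarrow> (nat \<Rightarrow> real) \<Rightarrow> (nat \<Rightarrow> real) \<Rightarrow> wdec \<Rightarrow> wmult \<Rightarrow> real" where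
  "wlag M b t pE pC pD x m =
     wcost M b t x
     - lam m * ((\<Sum>i<nN M. wgD x i - wgC x i) - dem M t)
     - (\<Sum>k<nK M. \<Sum>tau\<in>win M t. lams m tau k *
          ((\<Sum>i<nN M. wgDs x i tau k - wgCs x i tau k) - fdem M t tau k))
     + (\<Sum>i<nN M.
          phi m i * (wE x i - pE i - xiC M i * wgC x i + wgD x i / xiD M i)
        + eUp m i * (wE x i - Emax (b i)) + eDn m i * (Emin (b i) - wE x i)
        + pCup m i * (wgC x i - gCmax (b i)) + pCdn m i * (gCmin (b i) - wgC x i)
        + pDup m i * (wgD x i - gDmax (b i)) + pDdn m i * (gDmin (b i) - wgD x i)
        + mCup m i * (wgC x i - pC i - rCup (b i)) + mCdn m i * (pC i - wgC x i - rCdn (b i))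
        + mDup m i * (wgD x i - pD i - rDup (b i)) + mDdn m i * (pD i - wgD x i - rDdn (b i)))
     + (\<Sum>k<nK M. \<Sum>tau\<in>win M t. \<Sum>i<nN M.
          phis m i tau k * (wEs x i tau k - prevS t (wE x) (wEs x) i tau k
                             - xiC M i * wgCs x i tau k + wgDs x i tau k / xiD M i)
        + eUps m i tau k * (wEs x i tau k - Emax (b i)) + eDns m i tau k * (Emin (b i) - wEs x i tau k)
        + pCups m i tau k * (wgCs x i tau k - gCmax (b i)) + pCdns m i tau k * (gCmin (b i) - wgCs x i tau k)
        + pDups m i tau k * (wgDs x i tau k - gDmax (b i)) + pDdns m i tau k * (gDmin (b i) - wgDs x i tau k)
        + mCups m i tau k * (wgCs x i tau k - prevS t (wgC x) (wgCs x) i tau k - rCup (b i))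
        + mCdns m i tau k * (prevS t (wgC x) (wgCs x) i tau k - wgCs x i tau k - rCdn (b i))
        + mDups m i tau k * (wgDs x i tau k - prevS t (wgD x) (wgDs x) i tau k - rDup (b i))
        + mDdns m i tau k * (prevS t (wgD x) (wgDs x) i tau k - wgDs x i tau k - rDdn (b i)))"

text \<open>(x, m) is an optimal primal solution together with optimal multipliers:
  primal feasibility, dual feasibility, complementary slackness, and x minimizes the
  Lagrangian (Lagrange multiplier / KKT characterization; for this LP equivalent to
  x primal optimal and m dual optimal).\<close>
definition wkkt :: "market \<Rightarrow> (nat \<Rightarrow> bid) \<Rightarrow> nat \<Rightarrow> (nat \<Rightarrow> real) \<Rightarrow> (nat \<Rightarrow> real) \<Rightarrow> (nat \<Rightarrow> real) \<Rightarrow> wdec \<Rightarrow> wmult \<Rightarrow> bool" where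
  "wkkt M b t pE pC pD x m \<longleftrightarrow>
     wopt M b t pE pC pD x \<and>
     (\<forall>i<nN M.
        0 \<le> eUp m i \<and> 0 \<le> eDn m i \<and> 0 \<le> pCup m i \<and> 0 \<le> pCdn m i \<and>
        0 \<le> pDup m i \<and> 0 \<le> pDdn m i \<and> 0 \<le> mCup m i \<and> 0 \<le> mCdn m i \<and>
        0 \<le> mDup m i \<and> 0 \<le> mDdn m i \<and>
        eUp m i * (wE x i - Emax (b i)) = 0 \<and> eDn m i * (Emin (b i) - wE x i) = 0 \<and>
        pCup m i * (wgC x i - gCmax (b i)) = 0 \<and> pCdn m i * (gCmin (b i) - wgC x i) = 0 \<and>
        pDup m i * (wgD x i - gDmax (b i)) = 0 \<and> pDdn m i * (gDmin (b i) - wgD x i) = 0 \<and>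
        mCup m i * (wgC x i - pC i - rCup (b i)) = 0 \<and> mCdn m i * (pC i - wgC x i - rCdn (b i)) = 0 \<and>
        mDup m i * (wgD x i - pD i - rDup (b i)) = 0 \<and> mDdn m i * (pD i - wgD x i - rDdn (b i)) = 0) \<and>
     (\<forall>tau\<in>win M t. \<forall>k<nK M. \<forall>i<nN M.
        0 \<le> eUps m i tau k \<and> 0 \<le> eDns m i tau k \<and> 0 \<le> pCups m i tau k \<and> 0 \<le> pCdns m i tau k \<and>
        0 \<le> pDups m i tau k \<and> 0 \<le> pDdns m i tau k \<and> 0 \<le> mCups m i tau k \<and> 0 \<le> mCdns m i tau k \<and>
        0 \<le> mDups m i tau k \<and> 0 \<le> mDdns m i tau k \<and>
        eUps m i tau k * (wEs x i tau k - Emax (b i)) = 0 \<and>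
        eDns m i tau k * (Emin (b i) - wEs x i tau k) = 0 \<and>
        pCups m i tau k * (wgCs x i tau k - gCmax (b i)) = 0 \<and>
        pCdns m i tau k * (gCmin (b i) - wgCs x i tau k) = 0 \<and>
        pDups m i tau k * (wgDs x i tau k - gDmax (b i)) = 0 \<and>
        pDdns m i tau k * (gDmin (b i) - wgDs x i tau k) = 0 \<and>
        mCups m i tau k * (wgCs x i tau k - prevS t (wgC x) (wgCs x) i tau k - rCup (b i)) = 0 \<and>
        mCdns m i tau k * (prevS t (wgC x) (wgCs x) i tau k - wgCs x i tau k - rCdn (b i)) = 0 \<and>
        mDups m i tau k * (wgDs x i tau k - prevS t (wgD x) (wgDs x) i tau k - rDup (b i)) = 0 \<and>
        mDdns m i tau k * (prevS t (wgD x) (wgDs x) i tau k - wgDs x i tau k - rDdn (b i)) = 0) \<and>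
     (\<forall>y. wlag M b t pE pC pD x m \<le> wlag M b t pE pC pD y m)"

text \<open>Realized SOC / dispatch sequences of ESR i under run X; index 0 is the initial condition.\<close>
definition seqE :: "market \<Rightarrow> (nat \<Rightarrow> wdec) \<Rightarrow> nat \<Rightarrow> nat \<Rightarrow> real" where
  "seqE M X i t = (if t = 0 then Einit M i else wE (X t) i)"
definition dispC :: "market \<Rightarrow> (nat \<Rightarrow> wdec) \<Rightarrow> nat \<Rightarrow> nat \<Rightarrow> real" where
  "dispC M X i t = (if t = 0 then gCinit M i else wgC (X t) i)"
definition dispD :: "market \<Rightarrow> (nat \<Rightarrow> wdec) \<Rightarrow> nat \<Rightarrow> nat \<Rightarrow> real" where
  "dispD M X i t = (if t = 0 then gDinit M i else wgD (X t) i)"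

definition rw_run :: "market \<Rightarrow> (nat \<Rightarrow> bid) \<Rightarrow> (nat \<Rightarrow> wdec) \<Rightarrow> bool" where
  "rw_run M b X \<longleftrightarrow> (\<forall>t\<in>{1..nT M}.
     wopt M b t (\<lambda>i. seqE M X i (t - 1)) (\<lambda>i. dispC M X i (t - 1)) (\<lambda>i. dispD M X i (t - 1)) (X t))"

definition rw_run_mult :: "market \<Rightarrow> (nat \<Rightarrow> bid) \<Rightarrow> (nat \<Rightarrow> wdec) \<Rightarrow> (nat \<Rightarrow> wmult) \<Rightarrow> bool" where
  "rw_run_mult M b X Mu \<longleftrightarrow> (\<forall>t\<in>{1..nT M}.
     wkkt M b t (\<lambda>i. seqE M X i (t - 1)) (\<lambda>i. dispC M X i (t - 1)) (\<lambda>i. dispD M X i (t - 1)) (X t) (Mu t))"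

definition DeltaC :: "market \<Rightarrow> wmult \<Rightarrow> nat \<Rightarrow> nat \<Rightarrow> real" where
  "DeltaC M m t i = - (mCup m i - mCdn m i) +
     (if 2 \<le> nW M then (\<Sum>k<nK M. mCups m i (Suc t) k - mCdns m i (Suc t) k) else 0)"
definition DeltaD :: "market \<Rightarrow> wmult \<Rightarrow> nat \<Rightarrow> nat \<Rightarrow> real" where
  "DeltaD M m t i = - (mDup m i - mDdn m i) +
     (if 2 \<le> nW M then (\<Sum>k<nK M. mDups m i (Suc t) k - mDdns m i (Suc t) k) else 0)"

definition tlmpC :: "market \<Rightarrow> wmult \<Rightarrow> nat \<Rightarrow> nat \<Rightarrow> real" where
  "tlmpC M m t i = lam m - xiC M i * phi m i - DeltaC M m t i"
definition tlmpD :: "market \<Rightarrow> wmult \<Rightarrow> nat \<Rightarrow> nat \<Rightarrow> real" where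
  "tlmpD M m t i = lam m - phi m i / xiD M i + DeltaD M m t i"

text \<open>sC, sD: dispatch sequences of ESR i (index 0 = initial condition).\<close>
definition true_feasible :: "market \<Rightarrow> nat \<Rightarrow> bid \<Rightarrow> (nat \<Rightarrow> real) \<Rightarrow> (nat \<Rightarrow> real) \<Rightarrow> bool" where
  "true_feasible M i th sC sD \<longleftrightarrow> sC 0 = gCinit M i \<and> sD 0 = gDinit M i \<and>
     (\<exists>sE. sE 0 = Einit M i \<and> (\<forall>t\<in>{1..nT M}.
        sE t - sE (t - 1) = xiC M i * sC t - sD t / xiD M i \<and>
        Emin th \<le> sE t \<and> sE t \<le> Emax th \<and>
        gCmin th \<le> sC t \<and> sC t \<le> gCmax th \<and>
        gDmin th \<le> sD t \<and> sD t \<le> gDmax th \<and>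
        sC t - sC (t - 1) \<le> rCup th \<and> sC (t - 1) - sC t \<le> rCdn th \<and>
        sD t - sD (t - 1) \<le> rDup th \<and> sD (t - 1) - sD t \<le> rDdn th))"

text \<open>Profit of ESR i with true parameters thstar (q^D = f^D(.|thstar), q^C = f^C(.|thstar)),
  given fixed price sequences piC, piD.\<close>
definition profit :: "market \<Rightarrow> bid \<Rightarrow> (nat \<Rightarrow> real) \<Rightarrow> (nat \<Rightarrow> real) \<Rightarrow> (nat \<Rightarrow> real) \<Rightarrow> (nat \<Rightarrow> real) \<Rightarrow> real" where
  "profit M thstar piC piD sC sD =
     (\<Sum>t\<in>{1..nT M}. piD t * sD t - piC t * sC t - bidD thstar (sD t) + bidC thstar (sC t))"

end

theory Submission
  imports Defs
begin

text \<open>Once the TLMP sequence is fixed, the profit of ESR i splits over the intervals into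
  terms (\<pi>^D - c^D) g^D + (c^C - \<pi>^C) g^C. The truthful dispatch of interval t minimizes
  the Lagrangian of the interval-t problem, and the derivative of that Lagrangian in g^D_it is
  c^D - \<pi>^D plus the multipliers of the power limits only: the SOC-transition and ramping
  multipliers coupling interval t to its neighbours are exactly the terms \<phi> and \<Delta> built
  into the TLMP (likewise for charging). By complementary slackness the truthful dispatch
  therefore maximizes every interval term over the true power range, which contains any
  dispatch the ESR can follow.\<close>

lemma sum_lessThan_shift_at:
  fixes f g :: "nat \<Rightarrow> 'a::ab_group_add"
  assumes "i < n" and "\<And>j. g j = f j + (if j = i then c else 0)"
  shows "(\<Sum>j<n. g j) = (\<Sum>j<n. f j) + c"
  using assms by (simp add: sum.distrib)

lemma box_multipliers_variational_ineq:
  fixes a v g lo hi up dn :: real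
  assumes stationary: "0 \<le> (v - g) * (a + up - dn)"
    and "0 \<le> up" "0 \<le> dn" "up * (g - hi) = 0" "dn * (lo - g) = 0"
    and "lo \<le> v" "v \<le> hi"
  shows "0 \<le> (v - g) * a"
proof -
  have "(v - g) * up = up * (v - hi)" "(v - g) * dn = dn * (v - lo)"
    using assms(4,5) by (auto simp: right_diff_distrib mult.commute)
  moreover have "up * (v - hi) \<le> 0" "0 \<le> dn * (v - lo)"
    using assms(2,3,6,7) by (simp_all add: mult_nonneg_nonpos)
  ultimately show ?thesis
    using stationary by (simp add: distrib_left right_diff_distrib)
qed

lemma finite_win [simp]: "finite (win M t)"
  unfolding win_def by simp

lemma Suc_in_win_iff: "Suc t \<in> win M t \<longleftrightarrow> 2 \<le> nW M"
  unfolding win_def by auto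

definition lag_interval_term ::
  "market \<Rightarrow> (nat \<Rightarrow> bid) \<Rightarrow> (nat \<Rightarrow> real) \<Rightarrow> (nat \<Rightarrow> real) \<Rightarrow> (nat \<Rightarrow> real) \<Rightarrow> wdec \<Rightarrow> wmult
     \<Rightarrow> nat \<Rightarrow> real"
where
  "lag_interval_term M b pE pC pD x m j =
     phi m j * (wE x j - pE j - xiC M j * wgC x j + wgD x j / xiD M j)
     + eUp m j * (wE x j - Emax (b j)) + eDn m j * (Emin (b j) - wE x j)
     + pCup m j * (wgC x j - gCmax (b j)) + pCdn m j * (gCmin (b j) - wgC x j)
     + pDup m j * (wgD x j - gDmax (b j)) + pDdn m j * (gDmin (b j) - wgD x j)
     + mCup m j * (wgC x j - pC j - rCup (b j)) + mCdn m j * (pC j - wgC x j - rCdn (b j))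
     + mDup m j * (wgD x j - pD j - rDup (b j)) + mDdn m j * (pD j - wgD x j - rDdn (b j))"

definition lag_scenario_term ::
  "market \<Rightarrow> (nat \<Rightarrow> bid) \<Rightarrow> nat \<Rightarrow> wdec \<Rightarrow> wmult \<Rightarrow> nat \<Rightarrow> nat \<Rightarrow> nat \<Rightarrow> real"
where
  "lag_scenario_term M b t x m k tau j =
     phis m j tau k * (wEs x j tau k - prevS t (wE x) (wEs x) j tau k
                        - xiC M j * wgCs x j tau k + wgDs x j tau k / xiD M j)
     + eUps m j tau k * (wEs x j tau k - Emax (b j)) + eDns m j tau k * (Emin (b j) - wEs x j tau k)
     + pCups m j tau k * (wgCs x j tau k - gCmax (b j)) + pCdns m j tau k * (gCmin (b j) - wgCs x j tau k)
     + pDups m j tau k * (wgDs x j tau k - gDmax (b j)) + pDdns m j tau k * (gDmin (b j) - wgDs x j tau k)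
     + mCups m j tau k * (wgCs x j tau k - prevS t (wgC x) (wgCs x) j tau k - rCup (b j))
     + mCdns m j tau k * (prevS t (wgC x) (wgCs x) j tau k - wgCs x j tau k - rCdn (b j))
     + mDups m j tau k * (wgDs x j tau k - prevS t (wgD x) (wgDs x) j tau k - rDup (b j))
     + mDdns m j tau k * (prevS t (wgD x) (wgDs x) j tau k - wgDs x j tau k - rDdn (b j))"

lemma wlag_split:
  "wlag M b t pE pC pD x m =
     wcost M b t x
     - lam m * ((\<Sum>j<nN M. wgD x j - wgC x j) - dem M t)
     - (\<Sum>k<nK M. \<Sum>tau\<in>win M t. lams m tau k *
          ((\<Sum>j<nN M. wgDs x j tau k - wgCs x j tau k) - fdem M t tau k))
     + (\<Sum>j<nN M. lag_interval_term M b pE pC pD x m j)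
     + (\<Sum>k<nK M. \<Sum>tau\<in>win M t. \<Sum>j<nN M. lag_scenario_term M b t x m k tau j)"
  unfolding wlag_def lag_interval_term_def lag_scenario_term_def ..

lemma lag_interval_term_update_wgD:
  "lag_interval_term M b pE pC pD (x\<lparr>wgD := (wgD x)(i := v)\<rparr>) m j =
     lag_interval_term M b pE pC pD x m j
     + (if j = i then (v - wgD x i) * (phi m i / xiD M i + pDup m i - pDdn m i + mDup m i - mDdn m i)
        else 0)"
  by (auto simp: lag_interval_term_def algebra_simps diff_divide_distrib)

lemma lag_interval_term_update_wgC:
  "lag_interval_term M b pE pC pD (x\<lparr>wgC := (wgC x)(i := v)\<rparr>) m j =
     lag_interval_term M b pE pC pD x m j
     + (if j = i then (v - wgC x i) * (- phi m i * xiC M i + pCup m i - pCdn m i + mCup m i - mCdn m i)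
        else 0)"
  by (auto simp: lag_interval_term_def algebra_simps)

text \<open>The interval-t dispatch is the predecessor (prevS) of the first look-ahead interval,
  so it also enters the scenario ramp constraints at t + 1.\<close>

lemma lag_scenario_term_update_wgD:
  "lag_scenario_term M b t (x\<lparr>wgD := (wgD x)(i := v)\<rparr>) m k tau j =
     lag_scenario_term M b t x m k tau j
     + (if j = i then if tau = Suc t then (v - wgD x i) * (mDdns m i tau k - mDups m i tau k) else 0
        else 0)"
  by (auto simp: lag_scenario_term_def prevS_def algebra_simps)

lemma lag_scenario_term_update_wgC:
  "lag_scenario_term M b t (x\<lparr>wgC := (wgC x)(i := v)\<rparr>) m k tau j =
     lag_scenario_term M b t x m k tau j
     + (if j = i then if tau = Suc t then (v - wgC x i) * (mCdns m i tau k - mCups m i tau k) else 0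
        else 0)"
  by (auto simp: lag_scenario_term_def prevS_def algebra_simps)

lemma wlag_update_wgD:
  assumes i: "i < nN M"
  shows "wlag M b t pE pC pD (x\<lparr>wgD := (wgD x)(i := v)\<rparr>) m = wlag M b t pE pC pD x m
     + (v - wgD x i) * (cD (b i) - tlmpD M m t i + pDup m i - pDdn m i)"
proof -
  let ?y = "x\<lparr>wgD := (wgD x)(i := v)\<rparr>" and ?d = "v - wgD x i"
  have "(\<Sum>j<nN M. bidD (b j) (wgD ?y j) - bidC (b j) (wgC ?y j))
      = (\<Sum>j<nN M. bidD (b j) (wgD x j) - bidC (b j) (wgC x j)) + ?d * cD (b i)"
    by (rule sum_lessThan_shift_at[OF i]) (auto simp: bidD_def algebra_simps)
  then have cost: "wcost M b t ?y = wcost M b t x + ?d * cD (b i)"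
    by (simp add: wcost_def)
  have balance: "(\<Sum>j<nN M. wgD ?y j - wgC ?y j) = (\<Sum>j<nN M. wgD x j - wgC x j) + ?d"
    by (rule sum_lessThan_shift_at[OF i]) auto
  have interval: "(\<Sum>j<nN M. lag_interval_term M b pE pC pD ?y m j)
      = (\<Sum>j<nN M. lag_interval_term M b pE pC pD x m j)
        + ?d * (phi m i / xiD M i + pDup m i - pDdn m i + mDup m i - mDdn m i)"
    by (rule sum_lessThan_shift_at[OF i lag_interval_term_update_wgD])
  have scenario: "(\<Sum>k<nK M. \<Sum>tau\<in>win M t. \<Sum>j<nN M. lag_scenario_term M b t ?y m k tau j)
      = (\<Sum>k<nK M. \<Sum>tau\<in>win M t. \<Sum>j<nN M. lag_scenario_term M b t x m k tau j)
        + ?d * (if 2 \<le> nW M then \<Sum>k<nK M. mDdns m i (Suc t) k - mDups m i (Suc t) k else 0)"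
    using i by (simp add: lag_scenario_term_update_wgD sum.distrib Suc_in_win_iff sum_distrib_left)
  show ?thesis
    unfolding wlag_split cost balance interval scenario
    by (simp add: tlmpD_def DeltaD_def algebra_simps sum_subtractf sum_distrib_left)
qed

lemma wlag_update_wgC:
  assumes i: "i < nN M"
  shows "wlag M b t pE pC pD (x\<lparr>wgC := (wgC x)(i := v)\<rparr>) m = wlag M b t pE pC pD x m
     + (v - wgC x i) * (tlmpC M m t i - cC (b i) + pCup m i - pCdn m i)"
proof -
  let ?y = "x\<lparr>wgC := (wgC x)(i := v)\<rparr>" and ?d = "v - wgC x i"
  have "(\<Sum>j<nN M. bidD (b j) (wgD ?y j) - bidC (b j) (wgC ?y j))
      = (\<Sum>j<nN M. bidD (b j) (wgD x j) - bidC (b j) (wgC x j)) + (wgC x i - v) * cC (b i)"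
    by (rule sum_lessThan_shift_at[OF i]) (auto simp: bidC_def algebra_simps)
  then have cost: "wcost M b t ?y = wcost M b t x + (wgC x i - v) * cC (b i)"
    by (simp add: wcost_def)
  have balance: "(\<Sum>j<nN M. wgD ?y j - wgC ?y j) = (\<Sum>j<nN M. wgD x j - wgC x j) + (wgC x i - v)"
    by (rule sum_lessThan_shift_at[OF i]) auto
  have interval: "(\<Sum>j<nN M. lag_interval_term M b pE pC pD ?y m j)
      = (\<Sum>j<nN M. lag_interval_term M b pE pC pD x m j)
        + ?d * (- phi m i * xiC M i + pCup m i - pCdn m i + mCup m i - mCdn m i)"
    by (rule sum_lessThan_shift_at[OF i lag_interval_term_update_wgC])
  have scenario: "(\<Sum>k<nK M. \<Sum>tau\<in>win M t. \<Sum>j<nN M. lag_scenario_term M b t ?y m k tau j)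
      = (\<Sum>k<nK M. \<Sum>tau\<in>win M t. \<Sum>j<nN M. lag_scenario_term M b t x m k tau j)
        + ?d * (if 2 \<le> nW M then \<Sum>k<nK M. mCdns m i (Suc t) k - mCups m i (Suc t) k else 0)"
    using i by (simp add: lag_scenario_term_update_wgC sum.distrib Suc_in_win_iff sum_distrib_left)
  show ?thesis
    unfolding wlag_split cost balance interval scenario
    by (simp add: tlmpC_def DeltaC_def algebra_simps sum_subtractf sum_distrib_left)
qed

lemma wkkt_discharge_best_response:
  assumes kkt: "wkkt M b t pE pC pD x m" and i: "i < nN M"
    and "gDmin (b i) \<le> v" "v \<le> gDmax (b i)"
  shows "(tlmpD M m t i - cD (b i)) * v \<le> (tlmpD M m t i - cD (b i)) * wgD x i"
proof -
  have "wlag M b t pE pC pD x m \<le> wlag M b t pE pC pD (x\<lparr>wgD := (wgD x)(i := v)\<rparr>) m"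
    using kkt unfolding wkkt_def by blast
  then have "0 \<le> (v - wgD x i) * (cD (b i) - tlmpD M m t i + pDup m i - pDdn m i)"
    by (simp add: wlag_update_wgD[OF i])
  moreover have "0 \<le> pDup m i" "0 \<le> pDdn m i"
      "pDup m i * (wgD x i - gDmax (b i)) = 0" "pDdn m i * (gDmin (b i) - wgD x i) = 0"
    using kkt i unfolding wkkt_def by auto
  ultimately have "0 \<le> (v - wgD x i) * (cD (b i) - tlmpD M m t i)"
    using assms(3,4) by (rule box_multipliers_variational_ineq)
  then show ?thesis
    by (simp add: algebra_simps)
qed

lemma wkkt_charge_best_response:
  assumes kkt: "wkkt M b t pE pC pD x m" and i: "i < nN M"
    and "gCmin (b i) \<le> v" "v \<le> gCmax (b i)"
  shows "(cC (b i) - tlmpC M m t i) * v \<le> (cC (b i) - tlmpC M m t i) * wgC x i"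
proof -
  have "wlag M b t pE pC pD x m \<le> wlag M b t pE pC pD (x\<lparr>wgC := (wgC x)(i := v)\<rparr>) m"
    using kkt unfolding wkkt_def by blast
  then have "0 \<le> (v - wgC x i) * (tlmpC M m t i - cC (b i) + pCup m i - pCdn m i)"
    by (simp add: wlag_update_wgC[OF i])
  moreover have "0 \<le> pCup m i" "0 \<le> pCdn m i"
      "pCup m i * (wgC x i - gCmax (b i)) = 0" "pCdn m i * (gCmin (b i) - wgC x i) = 0"
    using kkt i unfolding wkkt_def by auto
  ultimately have "0 \<le> (v - wgC x i) * (tlmpC M m t i - cC (b i))"
    using assms(3,4) by (rule box_multipliers_variational_ineq)
  then show ?thesis
    by (simp add: algebra_simps)
qed

theorem theorem3:
  fixes M :: market and i :: nat and thstar th :: bid and others :: "nat \<Rightarrow> bid"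
    and X Xdev :: "nat \<Rightarrow> wdec" and Mu :: "nat \<Rightarrow> wmult"
  assumes "i < nN M"
    and "1 \<le> nW M"
    and "\<forall>j<nN M. 0 < xiC M j \<and> xiC M j \<le> 1 \<and> 0 < xiD M j \<and> xiD M j \<le> 1"
    and "\<forall>t. (\<forall>k<nK M. 0 \<le> prob M t k) \<and> (\<Sum>k<nK M. prob M t k) = 1"
    and truthful: "rw_run_mult M (others(i := thstar)) X Mu"
    and deviation: "rw_run M (others(i := th)) Xdev"
    and followable: "true_feasible M i thstar (dispC M Xdev i) (dispD M Xdev i)"
  shows "profit M thstar (\<lambda>t. tlmpC M (Mu t) t i) (\<lambda>t. tlmpD M (Mu t) t i)
            (dispC M Xdev i) (dispD M Xdev i)
         \<le> profit M thstar (\<lambda>t. tlmpC M (Mu t) t i) (\<lambda>t. tlmpD M (Mu t) t i)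
            (dispC M X i) (dispD M X i)"
  unfolding profit_def
proof (rule sum_mono)
  fix t assume t: "t \<in> {1..nT M}"
  let ?uC = "dispC M Xdev i t" and ?uD = "dispD M Xdev i t"
  have kkt: "wkkt M (others(i := thstar)) t (\<lambda>i. seqE M X i (t - 1)) (\<lambda>i. dispC M X i (t - 1))
      (\<lambda>i. dispD M X i (t - 1)) (X t) (Mu t)"
    using truthful t unfolding rw_run_mult_def by blast
  have "gCmin thstar \<le> ?uC" "?uC \<le> gCmax thstar" "gDmin thstar \<le> ?uD" "?uD \<le> gDmax thstar"
    using followable t unfolding true_feasible_def by auto
  then have "(tlmpD M (Mu t) t i - cD thstar) * ?uD \<le> (tlmpD M (Mu t) t i - cD thstar) * wgD (X t) i"
      and "(cC thstar - tlmpC M (Mu t) t i) * ?uC \<le> (cC thstar - tlmpC M (Mu t) t i) * wgC (X t) i"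
    using wkkt_discharge_best_response[OF kkt \<open>i < nN M\<close>] wkkt_charge_best_response[OF kkt \<open>i < nN M\<close>]
    by simp_all
  moreover have "dispC M X i t = wgC (X t) i" "dispD M X i t = wgD (X t) i"
    using t by (simp_all add: dispC_def dispD_def)
  ultimately show "tlmpD M (Mu t) t i * ?uD - tlmpC M (Mu t) t i * ?uC - bidD thstar ?uD + bidC thstar ?uC
      \<le> tlmpD M (Mu t) t i * dispD M X i t - tlmpC M (Mu t) t i * dispC M X i t
        - bidD thstar (dispD M X i t) + bidC thstar (dispC M X i t)"
    by (simp add: bidD_def bidC_def algebra_simps)
qed

end
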